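(* A function $g\in\mathcal{G}$ is slow-jumping if and only if there exists a sub-polynomial function $h$ such that for all positive integers $x<y$ we have $g(y)\le \lfloor y/x\rfloor^2\, h(\lfloor y/x\rfloor x)\, g(x)$.
   Context: $\mathcal{G}=\{g:\mathbb{Z}_{\ge0}\to\mathbb{R}: g(0)=0,\ g(1)=1,\ g(x)>0\ \forall x>0\}$. A function $f:\mathbb{R}_{\ge0}\to\mathbb{R}_{\ge0}$ is sub-polynomial if for every $\alpha>0$, $\lim_{x\to\infty}x^\alpha f(x)=\infty$ and $\lim_{x\to\infty}x^{-\alpha}f(x)=0$. $g$ is slow-jumping if for every $\alpha>0$ there is $N>0$ such that for all positive integers $x<y$ with $y\ge N$, $g(y)\le \lfloor y/x\rfloor^{2+\alpha}x^\alpha g(x)$. *)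

theory Defs
  imports Complex_Main
begin

definition class_G :: "(nat \<Rightarrow> real) set" where
  "class_G = {g. g 0 = 0 \<and> g 1 = 1 \<and> (\<forall>x>0. g x > 0)}"

text \<open>A function from the nonnegative reals to the nonnegative reals, represented as a
  real function whose values on negative arguments are irrelevant.\<close>
definition sub_polynomial :: "(real \<Rightarrow> real) \<Rightarrow> bool" where
  "sub_polynomial f \<longleftrightarrow>
     (\<forall>x\<ge>0. f x \<ge> 0) \<and>
     (\<forall>\<alpha>>0. filterlim (\<lambda>x. x powr \<alpha> * f x) at_top at_top \<and>
             ((\<lambda>x. x powr (-\<alpha>) * f x) \<longlongrightarrow> 0) at_top)"

definition slow_jumping :: "(nat \<Rightarrow> real) \<Rightarrow> bool" where
  "slow_jumping g \<longleftrightarrow>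
     (\<forall>\<alpha>>0. \<exists>N::nat>0. \<forall>x y::nat. 0 < x \<and> x < y \<and> y \<ge> N \<longrightarrow>
        g y \<le> real (y div x) powr (2 + \<alpha>) * real x powr \<alpha> * g x)"

end

theory Submission
  imports Defs "HOL-Real_Asymp.Real_Asymp"
begin

text \<open>With \<open>q = y div x\<close> and \<open>n = q x\<close> we always have \<open>n \<le> y < 2 n\<close>, so a bound in terms of
  \<open>n\<close> is a bound in terms of \<open>y\<close> up to a factor 2. Slow jumping says precisely that the
  jump ratio \<open>g y / (q\<^sup>2 g x)\<close> is eventually at most \<open>n\<^sup>\<alpha>\<close> for every \<open>\<alpha> > 0\<close>. Hence any
  sub-polynomial majorant \<open>h\<close> of the ratio as a function of \<open>n\<close> gives slow jumping, and
  conversely the smallest majorant (the maximum of the finitely many ratios with a given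
  \<open>n\<close>, and at least 1) is sub-polynomial.\<close>

lemma less_twice_div_mult:
  fixes x y :: nat
  assumes "0 < x" "x \<le> y"
  shows "y < 2 * (y div x * x)"
proof -
  have "1 \<le> y div x" using assms by (simp add: div_greater_zero_iff Suc_le_eq)
  have "y < (y div x + 1) * x"
    using assms by (metis add.commute div_mult_mod_eq mod_less_divisor mult_Suc
        nat_add_left_cancel_less plus_1_eq_Suc)
  also have "\<dots> \<le> 2 * (y div x * x)" using \<open>1 \<le> y div x\<close> by simp
  finally show ?thesis .
qed

definition jump_ratio :: "(nat \<Rightarrow> real) \<Rightarrow> nat \<Rightarrow> nat \<Rightarrow> real" where
  "jump_ratio g x y = g y / (real (y div x) ^ 2 * g x)"

lemma le_jump_bound_iff_jump_ratio_le:
  fixes x y :: nat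
  assumes "g x > 0" "0 < x" "x \<le> y"
  shows "g y \<le> real (y div x) ^ 2 * c * g x \<longleftrightarrow> jump_ratio g x y \<le> c"
proof -
  have "real (y div x) > 0" using assms by (simp add: div_greater_zero_iff)
  then show ?thesis
    using assms(1) by (simp add: jump_ratio_def pos_divide_le_eq mult_ac)
qed

lemma powr_two_plus_mult_powr:
  fixes q x :: nat and a :: real
  assumes "q > 0"
  shows "real q powr (2 + a) * real x powr a = real q ^ 2 * real (q * x) powr a"
  using assms by (simp add: powr_add powr_realpow powr_mult)

lemma slow_jumping_iff_jump_ratio:
  assumes pos: "\<forall>x>0. g x > 0"
  shows "slow_jumping g \<longleftrightarrow>
    (\<forall>a>0. \<exists>N::nat>0. \<forall>x y. 0 < x \<and> x < y \<and> N \<le> y \<longrightarrow>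
       jump_ratio g x y \<le> real (y div x * x) powr a)"
proof -
  have "g y \<le> real (y div x) powr (2 + a) * real x powr a * g x \<longleftrightarrow>
        jump_ratio g x y \<le> real (y div x * x) powr a" if "0 < x" "x < y" for x y :: nat and a
    using that pos le_jump_bound_iff_jump_ratio_le[of g x y]
      powr_two_plus_mult_powr[of "y div x" a x]
    by (simp add: div_greater_zero_iff)
  then show ?thesis unfolding slow_jumping_def by meson
qed

definition jump_pairs :: "nat \<Rightarrow> (nat \<times> nat) set" where
  "jump_pairs n = {(x, y). 0 < x \<and> x < y \<and> y div x * x = n}"

lemma finite_jump_pairs: "finite (jump_pairs n)"
proof (rule finite_subset)
  show "jump_pairs n \<subseteq> {..2*n} \<times> {..2*n}"
  proof (rule subrelI)
    fix x y assume "(x, y) \<in> jump_pairs n"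
    then have "0 < x" "x < y" "y div x * x = n" by (simp_all add: jump_pairs_def)
    then show "(x, y) \<in> {..2*n} \<times> {..2*n}" using less_twice_div_mult[of x y] by simp
  qed
qed simp

definition jump_envelope :: "(nat \<Rightarrow> real) \<Rightarrow> real \<Rightarrow> real" where
  "jump_envelope g t = Max (insert 1 ((\<lambda>(x, y). jump_ratio g x y) ` jump_pairs (nat \<lfloor>t\<rfloor>)))"

lemma one_le_jump_envelope: "1 \<le> jump_envelope g t"
  by (simp add: jump_envelope_def finite_jump_pairs)

lemma jump_ratio_le_jump_envelope:
  assumes "0 < x" "x < y"
  shows "jump_ratio g x y \<le> jump_envelope g (real (y div x * x))"
proof -
  have "(x, y) \<in> jump_pairs (y div x * x)" using assms by (simp add: jump_pairs_def)
  then have "jump_ratio g x y \<in> (\<lambda>(x, y). jump_ratio g x y) ` jump_pairs (y div x * x)"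
    by (rule rev_image_eqI) simp
  then show ?thesis
    unfolding jump_envelope_def floor_of_nat nat_int
    by (intro Max_ge) (simp_all add: finite_jump_pairs)
qed

lemma jump_envelope_le_powr:
  assumes bound: "\<And>x y. 0 < x \<Longrightarrow> x < y \<Longrightarrow> N \<le> y \<Longrightarrow>
      jump_ratio g x y \<le> real (y div x * x) powr a"
    and "a \<ge> 0" "N > 0" "real N \<le> t"
  shows "jump_envelope g t \<le> t powr a"
proof -
  define n where "n = nat \<lfloor>t\<rfloor>"
  have "1 \<le> t" "N \<le> n" "real n \<le> t" using assms(3,4) unfolding n_def by linarith+
  have "jump_ratio g x y \<le> t powr a" if "(x, y) \<in> jump_pairs n" for x y
  proof -
    have xy: "0 < x" "x < y" "y div x * x = n" using that by (auto simp: jump_pairs_def)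
    then have "N \<le> y" using \<open>N \<le> n\<close> div_times_less_eq_dividend[of y x] by linarith
    then have "jump_ratio g x y \<le> real n powr a" using bound xy by metis
    also have "\<dots> \<le> t powr a" using \<open>real n \<le> t\<close> \<open>a \<ge> 0\<close> by (simp add: powr_mono2)
    finally show ?thesis .
  qed
  moreover have "1 \<le> t powr a" using \<open>1 \<le> t\<close> \<open>a \<ge> 0\<close> by (simp add: ge_one_powr_ge_zero)
  ultimately show ?thesis
    unfolding jump_envelope_def n_def[symmetric]
    by (intro Max.boundedI) (auto simp: finite_jump_pairs)
qed

lemma sub_polynomialI:
  assumes ge1: "\<And>t. 1 \<le> f t"
    and le_powr: "\<And>a. a > 0 \<Longrightarrow> \<forall>\<^sub>F t in at_top. f t \<le> t powr a"
  shows "sub_polynomial f"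
  unfolding sub_polynomial_def
proof (intro conjI allI impI)
  fix t :: real show "0 \<le> f t" using ge1[of t] by simp
next
  fix a :: real assume "a > 0"
  have "filterlim (\<lambda>t::real. t powr a) at_top at_top" using \<open>a > 0\<close> by real_asymp
  moreover have "\<forall>\<^sub>F t in at_top. t powr a \<le> t powr a * f t"
    using ge1 by (intro always_eventually allI) (simp add: mult_le_cancel_left1)
  ultimately show "filterlim (\<lambda>t. t powr a * f t) at_top at_top"
    by (rule filterlim_at_top_mono)
next
  fix a :: real assume "a > 0"
  have nonneg: "\<forall>\<^sub>F t in at_top. 0 \<le> t powr (-a) * f t"
    using ge1 by (intro always_eventually allI) (simp add: order_trans[OF zero_le_one])
  have "\<forall>\<^sub>F t in at_top. f t \<le> t powr (a/2)" using \<open>a > 0\<close> by (intro le_powr) simp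
  with eventually_gt_at_top[of 0]
  have le: "\<forall>\<^sub>F t in at_top. t powr (-a) * f t \<le> t powr (-a/2)"
  proof eventually_elim
    case (elim t)
    then have "t powr (-a) * f t \<le> t powr (-a) * t powr (a/2)" by (simp add: mult_left_mono)
    also have "\<dots> = t powr (-a/2)" using \<open>t > 0\<close> by (simp add: powr_add[symmetric])
    finally show ?case .
  qed
  have "((\<lambda>t::real. t powr (-a/2)) \<longlongrightarrow> 0) at_top" using \<open>a > 0\<close> by real_asymp
  then show "((\<lambda>t. t powr (-a) * f t) \<longlongrightarrow> 0) at_top"
    by (rule tendsto_sandwich[OF nonneg le tendsto_const])
qed

lemma sub_polynomial_eventually_le_powr:
  assumes "sub_polynomial h" "a > 0"
  shows "\<forall>\<^sub>F t in at_top. h t \<le> t powr a"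
proof -
  have "((\<lambda>t. t powr (-a) * h t) \<longlongrightarrow> 0) at_top"
    using assms unfolding sub_polynomial_def by blast
  then have "\<forall>\<^sub>F t in at_top. t powr (-a) * h t < 1" by (rule order_tendstoD) simp
  with eventually_gt_at_top[of 0] show ?thesis
  proof eventually_elim
    case (elim t)
    then have "h t / t powr a < 1" by (simp add: powr_minus_divide)
    then show ?case using \<open>t > 0\<close> by (simp add: pos_divide_less_eq)
  qed
qed

lemma sub_polynomial_jump_envelope:
  assumes "\<forall>x>0. g x > 0" "slow_jumping g"
  shows "sub_polynomial (jump_envelope g)"
proof (rule sub_polynomialI[OF one_le_jump_envelope])
  fix a :: real assume "a > 0"
  moreover have "\<forall>a>0. \<exists>N::nat>0. \<forall>x y. 0 < x \<and> x < y \<and> N \<le> y \<longrightarrow>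
      jump_ratio g x y \<le> real (y div x * x) powr a"
    using assms by (simp add: slow_jumping_iff_jump_ratio)
  ultimately obtain N :: nat where "N > 0" and bound: "\<And>x y. 0 < x \<Longrightarrow> x < y \<Longrightarrow> N \<le> y \<Longrightarrow>
      jump_ratio g x y \<le> real (y div x * x) powr a"
    by meson
  show "\<forall>\<^sub>F t in at_top. jump_envelope g t \<le> t powr a"
  proof (rule eventually_at_top_linorderI)
    fix t assume "real N \<le> t"
    with bound \<open>a > 0\<close> \<open>N > 0\<close> show "jump_envelope g t \<le> t powr a"
      by (intro jump_envelope_le_powr[of N g a t]) simp_all
  qed
qed

lemma slow_jumping_if_sub_polynomial_majorant:
  assumes pos: "\<forall>x>0. g x > 0" and "sub_polynomial h"
    and majorant: "\<And>x y. 0 < x \<Longrightarrow> x < y \<Longrightarrow> jump_ratio g x y \<le> h (real (y div x * x))"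
  shows "slow_jumping g"
proof -
  have "\<exists>N::nat>0. \<forall>x y. 0 < x \<and> x < y \<and> N \<le> y \<longrightarrow>
      jump_ratio g x y \<le> real (y div x * x) powr a" if "a > 0" for a
  proof -
    obtain M where M: "\<And>t. M \<le> t \<Longrightarrow> h t \<le> t powr a"
      using sub_polynomial_eventually_le_powr[OF \<open>sub_polynomial h\<close> \<open>a > 0\<close>]
      by (auto simp: eventually_at_top_linorder)
    obtain N :: nat where N: "2 * max M 1 + 1 \<le> real N" by (meson real_arch_simple)
    have "jump_ratio g x y \<le> real (y div x * x) powr a" if "0 < x" "x < y" "N \<le> y" for x y
    proof -
      have "real y < 2 * real (y div x * x)" using less_twice_div_mult[of x y] that by linarith
      then have "M \<le> real (y div x * x)" using N that(3) by linarith
      then show ?thesis using M majorant[OF that(1,2)] by (meson order_trans)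
    qed
    moreover have "N > 0" using N by (cases N) auto
    ultimately show ?thesis by blast
  qed
  then show ?thesis unfolding slow_jumping_iff_jump_ratio[OF pos] by blast
qed

theorem proposition16:
  fixes g :: "nat \<Rightarrow> real"
  assumes "g \<in> class_G"
  shows "slow_jumping g \<longleftrightarrow>
    (\<exists>h. sub_polynomial h \<and>
       (\<forall>x y::nat. 0 < x \<and> x < y \<longrightarrow>
          g y \<le> real (y div x) ^ 2 * h (real ((y div x) * x)) * g x))"
proof -
  have pos: "\<forall>x>0. g x > 0" using assms by (simp add: class_G_def)
  have majorant_iff: "g y \<le> real (y div x) ^ 2 * h (real (y div x * x)) * g x \<longleftrightarrow>
      jump_ratio g x y \<le> h (real (y div x * x))" if "0 < x" "x < y" for h x y
    using le_jump_bound_iff_jump_ratio_le[of g x y] pos that by simp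
  show ?thesis
  proof
    assume "slow_jumping g"
    then have "sub_polynomial (jump_envelope g)" by (rule sub_polynomial_jump_envelope[OF pos])
    then show "\<exists>h. sub_polynomial h \<and> (\<forall>x y. 0 < x \<and> x < y \<longrightarrow>
        g y \<le> real (y div x) ^ 2 * h (real (y div x * x)) * g x)"
      using majorant_iff jump_ratio_le_jump_envelope by blast
  next
    assume "\<exists>h. sub_polynomial h \<and> (\<forall>x y. 0 < x \<and> x < y \<longrightarrow>
        g y \<le> real (y div x) ^ 2 * h (real (y div x * x)) * g x)"
    then obtain h where "sub_polynomial h" and "\<forall>x y. 0 < x \<and> x < y \<longrightarrow>
        jump_ratio g x y \<le> h (real (y div x * x))"
      using majorant_iff by blast
    then show "slow_jumping g" using slow_jumping_if_sub_polynomial_majorant[OF pos] by blast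
  qed
qed

end
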